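(* Let $\Gamma,\alpha>0$ and $l(y)=\frac{\alpha p(y)}{\alpha+\sqrt\Gamma g(y)}$. Then $H(y)=y^3 l(y)$ is strictly increasing on $(0,\infty)$; in particular $y\,l'(y)+3l(y)>0$ for all $y>0$.
   Context: $g(x)=\coth x-\frac1x$ and $p(x)=\frac{g(x)}{x}=\frac{x\coth x-1}{x^2}$ for $x>0$. *)

theory Defs
  imports "HOL-Analysis.Analysis"
begin

definition coth :: "real \<Rightarrow> real" where
  "coth x = cosh x / sinh x"

definition g :: "real \<Rightarrow> real" where
  "g x = coth x - 1 / x"

definition p :: "real \<Rightarrow> real" where
  "p x = g x / x"

definition l :: "real \<Rightarrow> real \<Rightarrow> real \<Rightarrow> real" where
  "l \<Gamma> \<alpha> y = \<alpha> * p y / (\<alpha> + sqrt \<Gamma> * g y)"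

definition H :: "real \<Rightarrow> real \<Rightarrow> real \<Rightarrow> real" where
  "H \<Gamma> \<alpha> y = y ^ 3 * l \<Gamma> \<alpha> y"

end

theory Submission
  imports Defs
begin

text \<open>
  Writing \<open>D = \<alpha> + \<surd>\<Gamma> g\<close>, we have \<open>l = \<alpha> g / (y D)\<close>, and a direct computation using
  \<open>D - \<surd>\<Gamma> g = \<alpha>\<close> gives \<open>y l' + 3 l = \<alpha> (\<alpha> y g' + 2 g D) / (y D\<^sup>2)\<close>. This is positive
  because \<open>g > 0\<close> (from \<open>tanh y < y\<close>) and \<open>g' = 1/y\<^sup>2 - 1/sinh\<^sup>2 y \<ge> 0\<close> (from \<open>y \<le> sinh y\<close>).
  Since \<open>H' = y\<^sup>2 (y l' + 3 l)\<close>, \<open>H\<close> is strictly increasing.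
\<close>

lemma strict_mono_on_greaterThan_if_DERIV_pos:
  fixes f :: "real \<Rightarrow> real"
  assumes "\<And>x. a < x \<Longrightarrow> \<exists>d. (f has_real_derivative d) (at x) \<and> d > 0"
  shows "strict_mono_on {a<..} f"
proof (rule strict_mono_onI)
  fix x y assume "x \<in> {a<..}" "y \<in> {a<..}" "x < y"
  then show "f x < f y"
    by (intro DERIV_pos_imp_increasing[OF \<open>x < y\<close>] assms) auto
qed

lemma x_le_sinh: "0 \<le> (x::real) \<Longrightarrow> x \<le> sinh x"
  using real_le_x_sinh[of x] by (simp add: sinh_field_def exp_minus)

lemma sinh_less_mult_cosh:
  assumes "0 < (x::real)"
  shows "sinh x < x * cosh x"
proof -
  have "(\<lambda>t. t * cosh t - sinh t) 0 < (\<lambda>t. t * cosh t - sinh t) x"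
  proof (rule DERIV_pos_imp_increasing_open[OF assms])
    fix t :: real assume "0 < t"
    then show "\<exists>d. ((\<lambda>t. t * cosh t - sinh t) has_real_derivative d) (at t) \<and> d > 0"
      by (intro exI[of _ "t * sinh t"]) (auto intro!: derivative_eq_intros)
  qed (intro continuous_intros)
  then show ?thesis by simp
qed

lemma g_pos: "0 < (y::real) \<Longrightarrow> 0 < g y"
  using sinh_less_mult_cosh[of y] by (simp add: g_def coth_def field_simps)

lemma g_has_real_derivative:
  assumes "0 < (y::real)"
  shows "(g has_real_derivative 1 / y\<^sup>2 - 1 / (sinh y)\<^sup>2) (at y)"
proof -
  have "cosh y * cosh y = sinh y * sinh y + 1"
    using cosh_square_eq[of y] by (simp add: power2_eq_square)
  with assms have "((\<lambda>t. cosh t / sinh t - 1 / t) has_real_derivative 1 / y\<^sup>2 - 1 / (sinh y)\<^sup>2) (at y)"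
    by (auto intro!: derivative_eq_intros simp: field_simps power2_eq_square)
  then show ?thesis
    by (simp add: g_def[abs_def] coth_def)
qed

lemma g_derivative_nonneg: "0 < (y::real) \<Longrightarrow> 0 \<le> 1 / y\<^sup>2 - 1 / (sinh y)\<^sup>2"
  using x_le_sinh[of y] by (simp add: field_simps power_mono)

lemma quotient_over_linear_has_real_derivative:
  fixes f :: "real \<Rightarrow> real"
  assumes f: "(f has_real_derivative f') (at y)" and "y \<noteq> 0" and "a + c * f y \<noteq> 0"
  defines "q \<equiv> \<lambda>t. a * (f t / t) / (a + c * f t)"
  shows "(q has_real_derivative
           (a * (a * y * f' + 2 * f y * (a + c * f y)) / (y * (a + c * f y)\<^sup>2) - 3 * q y) / y) (at y)"
proof -
  define D where "D = a + c * f y"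
  have "D \<noteq> 0" using assms(3) by (simp add: D_def)
  have "(q has_real_derivative (a * ((f' * y - f y) / y\<^sup>2) * D - a * (f y / y) * (c * f')) / (D * D)) (at y)"
    unfolding q_def D_def using \<open>y \<noteq> 0\<close>
    by (intro DERIV_divide assms(3)) (auto intro!: derivative_eq_intros f simp: field_simps power2_eq_square)
  moreover have "(a * ((f' * y - f y) / y\<^sup>2) * D - a * (f y / y) * (c * f')) / (D * D)
      = (a * (a * y * f' + 2 * f y * D) / (y * D\<^sup>2) - 3 * q y) / y"
    using \<open>y \<noteq> 0\<close> \<open>D \<noteq> 0\<close> unfolding q_def D_def[symmetric]
    by (simp add: field_simps power2_eq_square) (simp add: D_def algebra_simps)
  ultimately show ?thesis by (simp add: D_def)
qed

lemma l_has_real_derivative: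
  assumes "0 < \<Gamma>" "0 < \<alpha>" "0 < y"
  defines "D \<equiv> \<alpha> + sqrt \<Gamma> * g y"
  shows "(l \<Gamma> \<alpha> has_real_derivative
           (\<alpha> * (\<alpha> * y * (1 / y\<^sup>2 - 1 / (sinh y)\<^sup>2) + 2 * g y * D) / (y * D\<^sup>2) - 3 * l \<Gamma> \<alpha> y) / y)
         (at y)"
proof -
  have "D > 0"
    using g_pos[OF \<open>0 < y\<close>] assms by (simp add: D_def add_pos_nonneg)
  have "l \<Gamma> \<alpha> = (\<lambda>t. \<alpha> * (g t / t) / (\<alpha> + sqrt \<Gamma> * g t))"
    by (simp add: fun_eq_iff l_def p_def)
  with quotient_over_linear_has_real_derivative[OF g_has_real_derivative[OF \<open>0 < y\<close>]]
    \<open>0 < y\<close> \<open>D > 0\<close> show ?thesis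
    unfolding D_def by simp
qed

lemma l_growth_pos:
  assumes "0 < \<Gamma>" "0 < \<alpha>" "0 < y"
  defines "D \<equiv> \<alpha> + sqrt \<Gamma> * g y"
  shows "0 < \<alpha> * (\<alpha> * y * (1 / y\<^sup>2 - 1 / (sinh y)\<^sup>2) + 2 * g y * D) / (y * D\<^sup>2)"
proof -
  have "g y > 0" "D > 0"
    using g_pos[OF \<open>0 < y\<close>] assms by (simp_all add: D_def add_pos_nonneg)
  with g_derivative_nonneg[OF \<open>0 < y\<close>] assms(2,3) show ?thesis
    by (intro divide_pos_pos mult_pos_pos add_nonneg_pos) auto
qed

lemma l_has_derivative_with_positive_growth:
  assumes "0 < \<Gamma>" "0 < \<alpha>" "0 < y"
  obtains l' where "(l \<Gamma> \<alpha> has_real_derivative l') (at y)" "0 < y * l' + 3 * l \<Gamma> \<alpha> y"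
  by (rule that[OF l_has_real_derivative[OF assms]]) (use l_growth_pos[OF assms] \<open>0 < y\<close> in simp)

theorem mainTheorem3:
  fixes \<Gamma> \<alpha> :: real
  assumes "\<Gamma> > 0" and "\<alpha> > 0"
  shows "strict_mono_on {0<..} (H \<Gamma> \<alpha>)
     \<and> (\<forall>y>0. l \<Gamma> \<alpha> differentiable (at y)
            \<and> y * deriv (l \<Gamma> \<alpha>) y + 3 * l \<Gamma> \<alpha> y > 0)"
proof -
  have "\<exists>d. (H \<Gamma> \<alpha> has_real_derivative d) (at y) \<and> d > 0" if "y > 0" for y
  proof -
    obtain l' where l': "(l \<Gamma> \<alpha> has_real_derivative l') (at y)" and "0 < y * l' + 3 * l \<Gamma> \<alpha> y"
      using l_has_derivative_with_positive_growth[OF assms \<open>y > 0\<close>] .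
    then have "0 < y\<^sup>2 * (y * l' + 3 * l \<Gamma> \<alpha> y)"
      using \<open>y > 0\<close> by simp
    moreover have "(H \<Gamma> \<alpha> has_real_derivative y\<^sup>2 * (y * l' + 3 * l \<Gamma> \<alpha> y)) (at y)"
      unfolding H_def[abs_def]
      by (auto intro!: derivative_eq_intros l' simp: algebra_simps power2_eq_square power3_eq_cube)
    ultimately show ?thesis by blast
  qed
  then have "strict_mono_on {0<..} (H \<Gamma> \<alpha>)"
    by (rule strict_mono_on_greaterThan_if_DERIV_pos) simp
  moreover have "l \<Gamma> \<alpha> differentiable (at y) \<and> y * deriv (l \<Gamma> \<alpha>) y + 3 * l \<Gamma> \<alpha> y > 0"
    if "y > 0" for y
  proof -
    obtain l' where l': "(l \<Gamma> \<alpha> has_real_derivative l') (at y)" and "0 < y * l' + 3 * l \<Gamma> \<alpha> y"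
      using l_has_derivative_with_positive_growth[OF assms \<open>y > 0\<close>] .
    then show ?thesis
      using DERIV_imp_deriv[OF l'] real_differentiable_def by auto
  qed
  ultimately show ?thesis by blast
qed

end
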